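(* Let $S=P_1,P_2,\dots$ be a module sequence for a disjunctive program $P$. If $S$ is inconsistent, then every module sequence for $P$ is inconsistent.
   Context: A disjunctive program is a set of rules $A_1\vee\dots\vee A_m\leftarrow L_1,\dots,L_n$ ($m>0$, $n\ge0$), $A_j$ atoms, $L_i$ atoms or negated atoms $\mathtt{not}\,A$, possibly with function symbols. $\mathsf{Ground}(P)$ is its ground instantiation. For a set $M$ of ground atoms, $P^M$ is obtained from $\mathsf{Ground}(P)$ by deleting rules having some $\mathtt{not}\,B$ in the body with $B\in M$ and deleting negative literals from the remaining rules; $M$ is a stable model iff it is a minimal Herbrand model of $P^M$. A program is consistent iff it has a stable model. The dependency graph has ground atoms as vertices and an edge $A\to B$ whenever some $r\in\mathsf{Ground}(P)$ has $A$ in its head and $B$ occurring in $r$ (body or head); $A$ depends on $B$ if there is a directed path from $A$ to $B$ (every atom depends on itself). With $GH$ the set of ground head atoms of $\mathsf{Ground}(P)$ and an enumeration $p_1,p_2,\dots$ of $GH$, the induced module sequence is $P_1=\{r\in\mathsf{Ground}(P)\mid p_1$ depends on some atom of $head(r)\}$, $P_{i+1}=P_i\cup\{r\in\mathsf{Ground}(P)\mid p_{i+1}$ depends on some atom of $head(r)\}$; a module sequence for $P$ is one induced by some enumeration of $GH$. It is inconsistent if some $P_i$ is inconsistent. *)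

theory Defs
  imports Main "HOL-Library.Extended_Nat"
begin

datatype ('f, 'v) trm = Var 'v | Fn 'f "('f, 'v) trm list"

datatype ('p, 'f, 'v) atom = Atom 'p "('f, 'v) trm list"

datatype ('p, 'f, 'v) lit = Pos "('p, 'f, 'v) atom" | Neg "('p, 'f, 'v) atom"

text \<open>A rule  A1 v ... v Am <- L1, ..., Ln\<close>
datatype ('p, 'f, 'v) rule =
  Rule (head: "('p, 'f, 'v) atom list") (body: "('p, 'f, 'v) lit list")

type_synonym ('p, 'f, 'v) program = "('p, 'f, 'v) rule set"

definition disj_program :: "('p, 'f, 'v) program \<Rightarrow> bool" where
  "disj_program P \<longleftrightarrow> (\<forall>r\<in>P. head r \<noteq> [])"

fun ground_trm :: "('f, 'v) trm \<Rightarrow> bool" where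
  "ground_trm (Var x) = False"
| "ground_trm (Fn f ts) = (\<forall>t\<in>set ts. ground_trm t)"

fun ground_atom :: "('p, 'f, 'v) atom \<Rightarrow> bool" where
  "ground_atom (Atom q ts) = (\<forall>t\<in>set ts. ground_trm t)"

fun subst_trm :: "('v \<Rightarrow> ('f, 'v) trm) \<Rightarrow> ('f, 'v) trm \<Rightarrow> ('f, 'v) trm" where
  "subst_trm \<sigma> (Var x) = \<sigma> x"
| "subst_trm \<sigma> (Fn f ts) = Fn f (map (subst_trm \<sigma>) ts)"

fun subst_atom :: "('v \<Rightarrow> ('f, 'v) trm) \<Rightarrow> ('p, 'f, 'v) atom \<Rightarrow> ('p, 'f, 'v) atom" where
  "subst_atom \<sigma> (Atom q ts) = Atom q (map (subst_trm \<sigma>) ts)"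

fun subst_lit :: "('v \<Rightarrow> ('f, 'v) trm) \<Rightarrow> ('p, 'f, 'v) lit \<Rightarrow> ('p, 'f, 'v) lit" where
  "subst_lit \<sigma> (Pos a) = Pos (subst_atom \<sigma> a)"
| "subst_lit \<sigma> (Neg a) = Neg (subst_atom \<sigma> a)"

fun subst_rule :: "('v \<Rightarrow> ('f, 'v) trm) \<Rightarrow> ('p, 'f, 'v) rule \<Rightarrow> ('p, 'f, 'v) rule" where
  "subst_rule \<sigma> (Rule hs bs) = Rule (map (subst_atom \<sigma>) hs) (map (subst_lit \<sigma>) bs)"

definition ground_subst :: "('v \<Rightarrow> ('f, 'v) trm) \<Rightarrow> bool" where
  "ground_subst \<sigma> \<longleftrightarrow> (\<forall>x. ground_trm (\<sigma> x))"

definition Ground :: "('p, 'f, 'v) program \<Rightarrow> ('p, 'f, 'v) program" where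
  "Ground P = {subst_rule \<sigma> r | r \<sigma>. r \<in> P \<and> ground_subst \<sigma>}"

definition pos_body :: "('p, 'f, 'v) rule \<Rightarrow> ('p, 'f, 'v) atom set" where
  "pos_body r = {a. Pos a \<in> set (body r)}"

definition neg_body :: "('p, 'f, 'v) rule \<Rightarrow> ('p, 'f, 'v) atom set" where
  "neg_body r = {a. Neg a \<in> set (body r)}"

definition reduct :: "('p, 'f, 'v) program \<Rightarrow> ('p, 'f, 'v) atom set \<Rightarrow> ('p, 'f, 'v) program" where
  "reduct P M = {Rule (head r) [l \<leftarrow> body r. case l of Pos _ \<Rightarrow> True | Neg _ \<Rightarrow> False] | r.
                   r \<in> Ground P \<and> neg_body r \<inter> M = {}}"

definition herbrand_interp :: "('p, 'f, 'v) atom set \<Rightarrow> bool" where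
  "herbrand_interp M \<longleftrightarrow> (\<forall>a\<in>M. ground_atom a)"

definition is_model :: "('p, 'f, 'v) program \<Rightarrow> ('p, 'f, 'v) atom set \<Rightarrow> bool" where
  "is_model Q M \<longleftrightarrow> (\<forall>r\<in>Q. pos_body r \<subseteq> M \<and> neg_body r \<inter> M = {} \<longrightarrow> set (head r) \<inter> M \<noteq> {})"

definition minimal_herbrand_model :: "('p, 'f, 'v) program \<Rightarrow> ('p, 'f, 'v) atom set \<Rightarrow> bool" where
  "minimal_herbrand_model Q M \<longleftrightarrow> herbrand_interp M \<and> is_model Q M \<and>
     (\<forall>N. herbrand_interp N \<and> N \<subset> M \<longrightarrow> \<not> is_model Q N)"

definition stable_model :: "('p, 'f, 'v) program \<Rightarrow> ('p, 'f, 'v) atom set \<Rightarrow> bool" where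
  "stable_model P M \<longleftrightarrow> minimal_herbrand_model (reduct P M) M"

definition consistent :: "('p, 'f, 'v) program \<Rightarrow> bool" where
  "consistent P \<longleftrightarrow> (\<exists>M. stable_model P M)"

definition atoms_of_rule :: "('p, 'f, 'v) rule \<Rightarrow> ('p, 'f, 'v) atom set" where
  "atoms_of_rule r = set (head r) \<union> pos_body r \<union> neg_body r"

definition dep_edges :: "('p, 'f, 'v) program \<Rightarrow> (('p, 'f, 'v) atom \<times> ('p, 'f, 'v) atom) set" where
  "dep_edges P = {(A, B). \<exists>r\<in>Ground P. A \<in> set (head r) \<and> B \<in> atoms_of_rule r}"

definition depends :: "('p, 'f, 'v) program \<Rightarrow> ('p, 'f, 'v) atom \<Rightarrow> ('p, 'f, 'v) atom \<Rightarrow> bool" where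
  "depends P A B \<longleftrightarrow> (A, B) \<in> (dep_edges P)\<^sup>*"

definition GH :: "('p, 'f, 'v) program \<Rightarrow> ('p, 'f, 'v) atom set" where
  "GH P = (\<Union>r\<in>Ground P. set (head r))"

text \<open>An enumeration of GH is a bijection from an initial segment {i. i < n} of nat
  (n possibly infinite) onto GH; indices start at 0 (p 0 is p_1).\<close>
definition enumeration :: "('p, 'f, 'v) program \<Rightarrow> enat \<Rightarrow> (nat \<Rightarrow> ('p, 'f, 'v) atom) \<Rightarrow> bool" where
  "enumeration P n p \<longleftrightarrow> bij_betw p {i. enat i < n} (GH P)"

text \<open>The i-th module (P_{i+1} in the paper's 1-based indexing).\<close>
definition module :: "('p, 'f, 'v) program \<Rightarrow> (nat \<Rightarrow> ('p, 'f, 'v) atom) \<Rightarrow> nat \<Rightarrow> ('p, 'f, 'v) program" where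
  "module P p i = {r \<in> Ground P. \<exists>j\<le>i. \<exists>A\<in>set (head r). depends P (p j) A}"

definition inconsistent_seq :: "('p, 'f, 'v) program \<Rightarrow> enat \<Rightarrow> (nat \<Rightarrow> ('p, 'f, 'v) atom) \<Rightarrow> bool" where
  "inconsistent_seq P n p \<longleftrightarrow> (\<exists>i. enat i < n \<and> \<not> consistent (module P p i))"

end

theory Submission
  imports Defs
begin

text \<open>Every atom of a rule in the module of the first \<open>i\<close> enumerated atoms lies in the
  dependency closure \<open>U\<close> of these atoms, and every other ground rule has its head outside \<open>U\<close>.
  So \<open>U\<close> is a splitting set: a stable model \<open>M\<close> of a larger program restricts to the stable
  model \<open>M \<inter> U\<close> of the module. Given any other enumeration, the finitely many atoms
  \<open>p 0, \<dots>, p i\<close> all occur among \<open>p' 0, \<dots>, p' j\<close> for some \<open>j\<close>, whose module contains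
  the inconsistent module and has \<open>U\<close> as a splitting set; hence it is inconsistent as well.\<close>

lemma subst_trm_ground: "ground_trm s \<Longrightarrow> subst_trm \<tau> s = s"
  by (induction s) (auto simp: map_idI)

lemma subst_trm_ground_subst: "ground_subst \<sigma> \<Longrightarrow> subst_trm \<tau> (subst_trm \<sigma> t) = subst_trm \<sigma> t"
  by (induction t) (auto simp: ground_subst_def subst_trm_ground)

lemma subst_atom_ground_subst: "ground_subst \<sigma> \<Longrightarrow> subst_atom \<tau> (subst_atom \<sigma> a) = subst_atom \<sigma> a"
  by (cases a) (auto simp: subst_trm_ground_subst)

lemma subst_lit_ground_subst: "ground_subst \<sigma> \<Longrightarrow> subst_lit \<tau> (subst_lit \<sigma> l) = subst_lit \<sigma> l"
  by (cases l) (auto simp: subst_atom_ground_subst)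

lemma subst_rule_ground_subst: "ground_subst \<sigma> \<Longrightarrow> subst_rule \<tau> (subst_rule \<sigma> r) = subst_rule \<sigma> r"
  by (cases r) (auto simp: subst_atom_ground_subst subst_lit_ground_subst)

lemma ground_subst_exists: "\<exists>\<rho>. ground_subst \<rho>"
  by (auto simp: ground_subst_def intro!: exI[of _ "\<lambda>_. Fn undefined []"])

lemma Ground_eq_self:
  fixes X :: "('p, 'f, 'v) program"
  assumes "X \<subseteq> Ground P"
  shows "Ground X = X"
proof
  show "Ground X \<subseteq> X"
  proof
    fix x assume "x \<in> Ground X"
    then obtain r \<tau> where r: "r \<in> X" "x = subst_rule \<tau> r" unfolding Ground_def by auto
    moreover obtain r0 \<sigma> where "ground_subst \<sigma>" "r = subst_rule \<sigma> r0"
      using r(1) assms unfolding Ground_def by auto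
    ultimately show "x \<in> X" using subst_rule_ground_subst by metis
  qed
next
  show "X \<subseteq> Ground X"
  proof
    fix x assume x: "x \<in> X"
    obtain \<rho> :: "'v \<Rightarrow> ('f, 'v) trm" where \<rho>: "ground_subst \<rho>" using ground_subst_exists by blast
    obtain r0 \<sigma> where "ground_subst \<sigma>" "x = subst_rule \<sigma> r0"
      using x assms unfolding Ground_def by auto
    then have "subst_rule \<rho> x = x" using subst_rule_ground_subst by metis
    then show "x \<in> Ground X" unfolding Ground_def using x \<rho> by (metis (mono_tags, lifting) mem_Collect_eq)
  qed
qed

definition del_neg :: "('p, 'f, 'v) rule \<Rightarrow> ('p, 'f, 'v) rule" where
  "del_neg r = Rule (head r) [l \<leftarrow> body r. case l of Pos _ \<Rightarrow> True | Neg _ \<Rightarrow> False]"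

lemma pos_body_del_neg [simp]: "pos_body (del_neg r) = pos_body r"
  by (auto simp: del_neg_def pos_body_def)

lemma neg_body_del_neg [simp]: "neg_body (del_neg r) = {}"
  by (auto simp: del_neg_def neg_body_def)

lemma head_del_neg [simp]: "head (del_neg r) = head r"
  by (simp add: del_neg_def)

lemma reduct_of_ground:
  "Ground Q = Q \<Longrightarrow> reduct Q M = del_neg ` {r \<in> Q. neg_body r \<inter> M = {}}"
  unfolding reduct_def del_neg_def by auto

lemma neg_body_reduct: "s \<in> reduct Q M \<Longrightarrow> neg_body s = {}"
  unfolding reduct_def by (auto simp: neg_body_def)

lemma is_model_reductD:
  assumes "is_model (reduct Q M) N" and "s \<in> reduct Q M" and "pos_body s \<subseteq> N"
  shows "set (head s) \<inter> N \<noteq> {}"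
  using assms neg_body_reduct unfolding is_model_def by blast

text \<open>In the next three lemmas \<open>U\<close> is a splitting set of the ground program \<open>Q\<close> and \<open>B\<close>
  the corresponding bottom part.\<close>

lemma is_model_reduct_bottom:
  assumes "Ground Q = Q" and "Ground B = B" and "B \<subseteq> Q"
    and bottom: "\<forall>r\<in>B. atoms_of_rule r \<subseteq> U"
    and "is_model (reduct Q M) M"
  shows "is_model (reduct B (M \<inter> U)) (M \<inter> U)"
  unfolding is_model_def
proof (intro ballI impI)
  fix s assume s: "s \<in> reduct B (M \<inter> U)" and fires: "pos_body s \<subseteq> M \<inter> U \<and> neg_body s \<inter> (M \<inter> U) = {}"
  obtain r where r: "r \<in> B" "neg_body r \<inter> (M \<inter> U) = {}" "s = del_neg r"
    using s reduct_of_ground[OF assms(2)] by auto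
  then have "neg_body r \<inter> M = {}" using bottom unfolding atoms_of_rule_def by blast
  then have "s \<in> reduct Q M" using reduct_of_ground[OF assms(1)] r \<open>B \<subseteq> Q\<close> by auto
  then have "set (head s) \<inter> M \<noteq> {}"
    using fires is_model_reductD[OF assms(5)] by blast
  then show "set (head s) \<inter> (M \<inter> U) \<noteq> {}"
    using r bottom unfolding atoms_of_rule_def by fastforce
qed

lemma is_model_reduct_extend:
  assumes "Ground Q = Q" and "Ground B = B" and "B \<subseteq> Q"
    and bottom: "\<forall>r\<in>B. atoms_of_rule r \<subseteq> U"
    and top: "\<forall>r\<in>Q - B. set (head r) \<inter> U = {}"
    and M: "is_model (reduct Q M) M"
    and N: "is_model (reduct B (M \<inter> U)) N" "N \<subseteq> M \<inter> U"
  shows "is_model (reduct Q M) (N \<union> (M - U))"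
  unfolding is_model_def
proof (intro ballI impI)
  fix s assume s: "s \<in> reduct Q M" and fires: "pos_body s \<subseteq> N \<union> (M - U) \<and> neg_body s \<inter> (N \<union> (M - U)) = {}"
  then obtain r where r: "r \<in> Q" "neg_body r \<inter> M = {}" "s = del_neg r"
    using reduct_of_ground[OF assms(1)] by auto
  show "set (head s) \<inter> (N \<union> (M - U)) \<noteq> {}"
  proof (cases "r \<in> B")
    case True
    then have "pos_body s \<subseteq> N" using fires bottom r(3) unfolding atoms_of_rule_def by auto
    moreover have "s \<in> reduct B (M \<inter> U)" using reduct_of_ground[OF assms(2)] r True by auto
    ultimately have "set (head s) \<inter> N \<noteq> {}" using is_model_reductD[OF N(1)] by blast
    then show ?thesis by auto
  next
    case False
    have "pos_body s \<subseteq> M" using fires N(2) by blast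
    then have "set (head s) \<inter> M \<noteq> {}" using is_model_reductD[OF M s] by blast
    moreover have "set (head s) \<inter> U = {}" using top r False by auto
    ultimately show ?thesis by auto
  qed
qed

lemma stable_model_bottom:
  assumes "Ground Q = Q" and "Ground B = B" and "B \<subseteq> Q"
    and bottom: "\<forall>r\<in>B. atoms_of_rule r \<subseteq> U"
    and top: "\<forall>r\<in>Q - B. set (head r) \<inter> U = {}"
    and "stable_model Q M"
  shows "stable_model B (M \<inter> U)"
proof -
  have hM: "herbrand_interp M" and mM: "is_model (reduct Q M) M"
    and minM: "\<And>N. herbrand_interp N \<Longrightarrow> N \<subset> M \<Longrightarrow> \<not> is_model (reduct Q M) N"
    using \<open>stable_model Q M\<close> unfolding stable_model_def minimal_herbrand_model_def by auto
  have "\<not> is_model (reduct B (M \<inter> U)) N" if "herbrand_interp N" "N \<subset> M \<inter> U" for N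
  proof
    assume "is_model (reduct B (M \<inter> U)) N"
    then have "is_model (reduct Q M) (N \<union> (M - U))"
      using is_model_reduct_extend[OF assms(1-5) mM] \<open>N \<subset> M \<inter> U\<close> by blast
    moreover have "herbrand_interp (N \<union> (M - U))"
      using hM \<open>herbrand_interp N\<close> unfolding herbrand_interp_def by auto
    ultimately show False using minM \<open>N \<subset> M \<inter> U\<close> by blast
  qed
  moreover have "herbrand_interp (M \<inter> U)" using hM unfolding herbrand_interp_def by auto
  ultimately show ?thesis
    using is_model_reduct_bottom[OF assms(1-4) mM]
    unfolding stable_model_def minimal_herbrand_model_def by blast
qed

definition dep_closure :: "('p, 'f, 'v) program \<Rightarrow> (nat \<Rightarrow> ('p, 'f, 'v) atom) \<Rightarrow> nat \<Rightarrow> ('p, 'f, 'v) atom set" where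
  "dep_closure P p i = {A. \<exists>k\<le>i. depends P (p k) A}"

lemma module_eq: "module P p i = {r \<in> Ground P. set (head r) \<inter> dep_closure P p i \<noteq> {}}"
  unfolding module_def dep_closure_def by auto

lemma atoms_of_rule_module:
  assumes "r \<in> module P p i"
  shows "atoms_of_rule r \<subseteq> dep_closure P p i"
proof
  fix B assume B: "B \<in> atoms_of_rule r"
  obtain A where A: "r \<in> Ground P" "A \<in> set (head r)" "A \<in> dep_closure P p i"
    using assms unfolding module_eq by auto
  then have "(A, B) \<in> dep_edges P" using B unfolding dep_edges_def by auto
  then show "B \<in> dep_closure P p i"
    using A(3) unfolding dep_closure_def depends_def by (blast intro: rtrancl_into_rtrancl)
qed

lemma consistent_module_antimono:
  assumes "dep_closure P p i \<subseteq> dep_closure P q j" and "consistent (module P q j)"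
  shows "consistent (module P p i)"
proof -
  let ?Q = "module P q j" and ?B = "module P p i" and ?U = "dep_closure P p i"
  have "?Q \<subseteq> Ground P" "?B \<subseteq> Ground P" unfolding module_def by auto
  then have ground: "Ground ?Q = ?Q" "Ground ?B = ?B" by (simp_all add: Ground_eq_self)
  have sub: "?B \<subseteq> ?Q" using assms(1) unfolding module_eq by auto
  have top: "\<forall>r\<in>?Q - ?B. set (head r) \<inter> ?U = {}" unfolding module_eq by auto
  have bottom: "\<forall>r\<in>?B. atoms_of_rule r \<subseteq> ?U" using atoms_of_rule_module by blast
  obtain M where "stable_model ?Q M" using assms(2) unfolding consistent_def by auto
  then have "stable_model ?B (M \<inter> ?U)"
    using stable_model_bottom[OF ground sub bottom top] by blast
  then show ?thesis unfolding consistent_def by auto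
qed

lemma dep_closure_subset_enumeration:
  assumes "enumeration P n p" and "enumeration P n' p'" and "enat i < n"
  shows "\<exists>j. enat j < n' \<and> dep_closure P p i \<subseteq> dep_closure P p' j"
proof -
  have "{..i} \<subseteq> {k. enat k < n}"
  proof
    fix k assume "k \<in> {..i}"
    then have "enat k \<le> enat i" by simp
    then show "k \<in> {k. enat k < n}" using le_less_trans[OF _ assms(3)] by simp
  qed
  then have "p ` {..i} \<subseteq> GH P"
    using assms(1) image_mono unfolding enumeration_def bij_betw_def by metis
  also have "GH P = p' ` {k. enat k < n'}"
    using assms(2) unfolding enumeration_def bij_betw_def by simp
  finally obtain C where C: "C \<subseteq> {k. enat k < n'}" "finite C" "p ` {..i} = p' ` C"
    using finite_subset_image[OF finite_imageI[OF finite_atMost]] by meson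
  then have "C \<noteq> {}" by auto
  define j where "j = Max C"
  have "j \<in> C" unfolding j_def using C(2) \<open>C \<noteq> {}\<close> by simp
  have match: "\<exists>m\<le>j. p k = p' m" if "k \<le> i" for k
  proof -
    have "p k \<in> p' ` C" using C(3) \<open>k \<le> i\<close> by blast
    then obtain m where "m \<in> C" "p k = p' m" by blast
    then show ?thesis using C(2) Max_ge unfolding j_def by blast
  qed
  have "dep_closure P p i \<subseteq> dep_closure P p' j"
  proof
    fix A assume "A \<in> dep_closure P p i"
    then obtain k where "k \<le> i" "depends P (p k) A" unfolding dep_closure_def by auto
    moreover obtain m where "m \<le> j" "p k = p' m" using match \<open>k \<le> i\<close> by blast
    ultimately show "A \<in> dep_closure P p' j" unfolding dep_closure_def by auto
  qed
  then show ?thesis using \<open>j \<in> C\<close> C(1) by blast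
qed

theorem theorem3p9:
  fixes P :: "('p, 'f, 'v) program"
  assumes "disj_program P"
    and "enumeration P n p" and "inconsistent_seq P n p"
    and "enumeration P n' p'"
  shows "inconsistent_seq P n' p'"
proof -
  obtain i where i: "enat i < n" "\<not> consistent (module P p i)"
    using assms(3) unfolding inconsistent_seq_def by blast
  obtain j where j: "enat j < n'" "dep_closure P p i \<subseteq> dep_closure P p' j"
    using dep_closure_subset_enumeration[OF assms(2,4) i(1)] by blast
  have "\<not> consistent (module P p' j)"
    using consistent_module_antimono[OF j(2)] i(2) by blast
  then show ?thesis unfolding inconsistent_seq_def using j(1) by blast
qed

end
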